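(* Let $\mathcal{H}$ be a finite-dimensional complex Hilbert space, let $P$ be a traceless Hermitian operator with $P^2=I$, let $H$ be a Hamiltonian (Hermitian operator) with $[H,P]=0$, and let $A$ and $B$ be Hermitian operators satisfying $\{A,P\} = \{B,P\} = 0$. Let $\rho = |\Psi\rangle\langle\Psi|$ where $|\Psi\rangle$ is a (normalized) eigenstate of $H$ with $P|\Psi\rangle = p|\Psi\rangle$, $p\in\{+1,-1\}$. Then for every real $t$, $$C(A,B,t) = p\, Q\!\left(\rho, \tfrac{P+A}{\sqrt{2}}, B(t)\right) + \mathrm{i}\, Q\!\left(\rho, \tfrac{I+\mathrm{i}A}{\sqrt{2}}, B(t)\right).$$
   Context: For an operator $O$, $O(t) := e^{\mathrm{i}Ht} O e^{-\mathrm{i}Ht}$. The two-point time correlator is $C(A,B,t) := \mathrm{Tr}[\rho\, A\, B(t)]$. The quench function is $Q(\rho,K,M) := \mathrm{Tr}(K\rho K^\dagger M)$ for operators $K$, $M$. $\{X,Y\} = XY+YX$. *)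

theory Defs
  imports "HOL-Analysis.Analysis"
begin

text \<open>Operators on a finite-dimensional complex Hilbert space C^n, represented
  as matrices complex^'n^'n (the dimension is the finite type 'n).\<close>

definition adj :: "complex^'n^'n \<Rightarrow> complex^'n^'n" where
  "adj M = (\<chi> i j. cnj (M $ j $ i))"

definition hermitian :: "complex^'n^'n \<Rightarrow> bool" where
  "hermitian M \<longleftrightarrow> adj M = M"

definition smat :: "complex \<Rightarrow> complex^'n^'n \<Rightarrow> complex^'n^'n" where
  "smat c M = (\<chi> i j. c * M $ i $ j)"

fun matpow :: "complex^'n^'n \<Rightarrow> nat \<Rightarrow> complex^'n^'n" where
  "matpow M 0 = mat 1"
| "matpow M (Suc k) = M ** matpow M k"

definition mexp :: "complex^'n^'n \<Rightarrow> complex^'n^'n" where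
  "mexp M = (\<chi> i j. (\<Sum>k. matpow M k $ i $ j / of_nat (fact k)))"

definition evol :: "complex^'n^'n \<Rightarrow> real \<Rightarrow> complex^'n^'n \<Rightarrow> complex^'n^'n" where
  "evol H t X = mexp (smat (\<i> * of_real t) H) ** X ** mexp (smat (- \<i> * of_real t) H)"

definition corr :: "complex^'n^'n \<Rightarrow> complex^'n^'n \<Rightarrow> complex^'n^'n \<Rightarrow> complex^'n^'n \<Rightarrow> real \<Rightarrow> complex" where
  "corr H \<rho> A B t = trace (\<rho> ** A ** evol H t B)"

definition quench :: "complex^'n^'n \<Rightarrow> complex^'n^'n \<Rightarrow> complex^'n^'n \<Rightarrow> complex" where
  "quench \<rho> K M = trace (K ** \<rho> ** adj K ** M)"

definition proj :: "complex^'n \<Rightarrow> complex^'n^'n" where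
  "proj \<psi> = (\<chi> i j. \<psi> $ i * cnj (\<psi> $ j))"

end

theory Submission
  imports Defs
begin

text \<open>The state \<open>\<rho>\<close> has definite parity, \<open>P \<rho> = \<rho> P = p \<rho>\<close>, so \<open>Tr(\<rho> Y) = 0\<close> for every
  \<open>Y\<close> anticommuting with \<open>P\<close> (a selection rule). As \<open>H\<close> commutes with \<open>P\<close>, so do the propagators
  \<open>exp(\<plusminus>\<i> H t)\<close>; hence \<open>M = B(t)\<close> and \<open>A M A\<close> anticommute with \<open>P\<close>. Expanding both quench
  functions, the selection rule kills \<open>Tr(\<rho> M)\<close> and \<open>Tr(A \<rho> A M)\<close>, leaving \<open>p Q\<^sub>1 = (a + b)/2\<close>
  and \<open>\<i> Q\<^sub>2 = (a - b)/2\<close> with \<open>a = Tr(\<rho> A M)\<close> and \<open>b = Tr(A \<rho> M)\<close>; their sum is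
  \<open>a = C(A,B,t)\<close>.\<close>

lemma matrix_add_rdistrib:
  "((X :: 'a::semiring_1^'n^'m) + Y) ** (Z :: 'a^'p^'n) = X ** Z + Y ** Z"
  by (simp add: matrix_matrix_mult_def vec_eq_iff distrib_right sum.distrib)

lemma matrix_mul_uminus_left: "(- (X :: 'a::ring_1^'n^'m)) ** (Y :: 'a^'p^'n) = - (X ** Y)"
  by (simp add: matrix_matrix_mult_def vec_eq_iff sum_negf)

lemma matrix_mul_uminus_right: "(X :: 'a::ring_1^'n^'m) ** (- (Y :: 'a^'p^'n)) = - (X ** Y)"
  by (simp add: matrix_matrix_mult_def vec_eq_iff sum_negf)

lemma trace_uminus: "trace (- (X :: 'a::ring_1^'n^'n)) = - trace X"
  by (simp add: trace_def sum_negf)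

lemma smat_mult_left: "smat c X ** Y = smat c (X ** Y)"
  by (simp add: smat_def matrix_matrix_mult_def vec_eq_iff sum_distrib_left mult.assoc)

lemma smat_mult_right: "X ** smat c Y = smat c (X ** Y)"
  by (simp add: smat_def matrix_matrix_mult_def vec_eq_iff sum_distrib_left algebra_simps)

lemma smat_smat: "smat a (smat b X) = smat (a * b) X"
  by (simp add: smat_def vec_eq_iff)

lemma trace_smat: "trace (smat c X) = c * trace X"
  by (simp add: smat_def trace_def sum_distrib_left)

lemma adj_smat: "adj (smat c X) = smat (cnj c) (adj X)"
  by (simp add: smat_def adj_def vec_eq_iff)

lemma adj_add: "adj (X + Y) = adj X + adj Y"
  by (simp add: adj_def vec_eq_iff)

lemma adj_mat_one: "adj (mat 1) = mat 1"
  by (simp add: adj_def mat_def vec_eq_iff)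

lemma commute_mult_anticommute:
  fixes X Y P :: "'a::ring_1^'n^'n"
  assumes "X ** P = P ** X" and "Y ** P = - (P ** Y)"
  shows "(X ** Y) ** P = - (P ** (X ** Y))"
proof -
  have "(X ** Y) ** P = - (X ** P ** Y)"
    by (simp only: assms(2) matrix_mul_uminus_right flip: matrix_mul_assoc)
  also have "\<dots> = - (P ** (X ** Y))"
    by (simp only: assms(1) matrix_mul_assoc)
  finally show ?thesis .
qed

lemma anticommute_mult_commute:
  fixes X Y P :: "'a::ring_1^'n^'n"
  assumes "X ** P = - (P ** X)" and "Y ** P = P ** Y"
  shows "(X ** Y) ** P = - (P ** (X ** Y))"
proof -
  have "(X ** Y) ** P = X ** P ** Y"
    by (simp only: assms(2) flip: matrix_mul_assoc)
  also have "\<dots> = - (P ** (X ** Y))"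
    by (simp only: assms(1) matrix_mul_uminus_left matrix_mul_assoc)
  finally show ?thesis .
qed

lemma anticommute_mult_anticommute:
  fixes X Y P :: "'a::ring_1^'n^'n"
  assumes "X ** P = - (P ** X)" and "Y ** P = - (P ** Y)"
  shows "(X ** Y) ** P = P ** (X ** Y)"
proof -
  have "(X ** Y) ** P = - (X ** P ** Y)"
    by (simp only: assms(2) matrix_mul_uminus_right flip: matrix_mul_assoc)
  also have "\<dots> = P ** (X ** Y)"
    by (simp only: assms(1) matrix_mul_uminus_left minus_minus matrix_mul_assoc)
  finally show ?thesis .
qed

definition entrywise_l1 :: "'a::real_normed_vector^'n^'m \<Rightarrow> real" where
  "entrywise_l1 X = (\<Sum>i\<in>UNIV. \<Sum>j\<in>UNIV. norm (X $ i $ j))"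

lemma norm_row_le_entrywise_l1: "(\<Sum>j\<in>UNIV. norm (X $ i $ j)) \<le> entrywise_l1 X"
  unfolding entrywise_l1_def
  by (rule member_le_sum) (simp_all add: sum_nonneg)

lemma norm_entry_le_entrywise_l1: "norm (X $ i $ j) \<le> entrywise_l1 X"
  using member_le_sum[of j UNIV "\<lambda>j. norm (X $ i $ j)"] norm_row_le_entrywise_l1[of X i]
  by simp

lemma entrywise_l1_nonneg: "0 \<le> entrywise_l1 X"
  unfolding entrywise_l1_def by (auto intro!: sum_nonneg)

lemma entrywise_l1_mult:
  "entrywise_l1 ((X :: 'a::real_normed_algebra_1^'n^'m) ** (Y :: 'a^'p^'n))
     \<le> entrywise_l1 X * entrywise_l1 Y"
proof -
  have "entrywise_l1 (X ** Y) \<le> (\<Sum>i\<in>UNIV. \<Sum>j\<in>UNIV. \<Sum>k\<in>UNIV. norm (X$i$k) * norm (Y$k$j))"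
    unfolding entrywise_l1_def matrix_matrix_mult_def vec_lambda_beta
    by (intro sum_mono order_trans[OF norm_sum] norm_mult_ineq)
  also have "\<dots> = (\<Sum>i\<in>UNIV. \<Sum>k\<in>UNIV. \<Sum>j\<in>UNIV. norm (X$i$k) * norm (Y$k$j))"
    by (rule sum.cong[OF refl], rule sum.swap)
  also have "\<dots> = (\<Sum>i\<in>UNIV. \<Sum>k\<in>UNIV. norm (X$i$k) * (\<Sum>j\<in>UNIV. norm (Y$k$j)))"
    by (simp only: sum_distrib_left)
  also have "\<dots> \<le> (\<Sum>i\<in>UNIV. \<Sum>k\<in>UNIV. norm (X$i$k) * entrywise_l1 Y)"
    by (intro sum_mono mult_left_mono norm_row_le_entrywise_l1) auto
  also have "\<dots> = entrywise_l1 X * entrywise_l1 Y"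
    by (simp add: entrywise_l1_def sum_distrib_right)
  finally show ?thesis .
qed

lemma entrywise_l1_matpow:
  fixes X :: "complex^'n^'n"
  shows "entrywise_l1 (matpow X m) \<le> entrywise_l1 X ^ m * entrywise_l1 (mat 1 :: complex^'n^'n)"
proof (induction m)
  case (Suc m)
  have "entrywise_l1 (matpow X (Suc m)) \<le> entrywise_l1 X * entrywise_l1 (matpow X m)"
    by (simp add: entrywise_l1_mult)
  also have "\<dots> \<le> entrywise_l1 X * (entrywise_l1 X ^ m * entrywise_l1 (mat 1 :: complex^'n^'n))"
    using Suc entrywise_l1_nonneg by (intro mult_left_mono)
  finally show ?case by (simp add: mult_ac)
qed simp

lemma summable_mexp_entry:
  fixes X :: "complex^'n^'n"
  shows "summable (\<lambda>m. matpow X m $ i $ j / of_nat (fact m))"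
proof (rule summable_norm_cancel, rule summable_comparison_test)
  define C where "C = entrywise_l1 (mat 1 :: complex^'n^'n)"
  show "summable (\<lambda>m. C * (inverse (fact m) * entrywise_l1 X ^ m))"
    by (intro summable_mult summable_exp)
  show "\<exists>N. \<forall>m\<ge>N. norm (norm (matpow X m $ i $ j / of_nat (fact m)))
                   \<le> C * (inverse (fact m) * entrywise_l1 X ^ m)"
  proof (intro exI allI impI)
    fix m :: nat
    have "norm (norm (matpow X m $ i $ j / of_nat (fact m))) = norm (matpow X m $ i $ j) / fact m"
      by (simp add: norm_divide)
    also have "\<dots> \<le> entrywise_l1 X ^ m * C / fact m"
      unfolding C_def
      by (intro divide_right_mono order_trans[OF norm_entry_le_entrywise_l1 entrywise_l1_matpow]) simp
    also have "\<dots> = C * (inverse (fact m) * entrywise_l1 X ^ m)"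
      by (simp add: field_simps)
    finally show "norm (norm (matpow X m $ i $ j / of_nat (fact m)))
                    \<le> C * (inverse (fact m) * entrywise_l1 X ^ m)" .
  qed
qed

lemma matrix_mult_mexp_entry:
  "(Y ** mexp X) $ i $ j = (\<Sum>m. (Y ** matpow X m) $ i $ j / of_nat (fact m))"
proof -
  have "(Y ** mexp X) $ i $ j = (\<Sum>k\<in>UNIV. Y$i$k * (\<Sum>m. matpow X m $ k $ j / of_nat (fact m)))"
    by (simp add: matrix_matrix_mult_def mexp_def)
  also have "\<dots> = (\<Sum>k\<in>UNIV. \<Sum>m. Y$i$k * (matpow X m $ k $ j / of_nat (fact m)))"
    by (intro sum.cong refl suminf_mult[symmetric] summable_mexp_entry)
  also have "\<dots> = (\<Sum>m. \<Sum>k\<in>UNIV. Y$i$k * (matpow X m $ k $ j / of_nat (fact m)))"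
    by (intro suminf_sum[symmetric] summable_mult summable_mexp_entry)
  finally show ?thesis
    by (simp add: matrix_matrix_mult_def sum_divide_distrib)
qed

lemma mexp_mult_matrix_entry:
  "(mexp X ** Y) $ i $ j = (\<Sum>m. (matpow X m ** Y) $ i $ j / of_nat (fact m))"
proof -
  have "(mexp X ** Y) $ i $ j = (\<Sum>k\<in>UNIV. (\<Sum>m. matpow X m $ i $ k / of_nat (fact m)) * Y$k$j)"
    by (simp add: matrix_matrix_mult_def mexp_def)
  also have "\<dots> = (\<Sum>k\<in>UNIV. \<Sum>m. matpow X m $ i $ k / of_nat (fact m) * Y$k$j)"
    by (intro sum.cong refl suminf_mult2 summable_mexp_entry)
  also have "\<dots> = (\<Sum>m. \<Sum>k\<in>UNIV. matpow X m $ i $ k / of_nat (fact m) * Y$k$j)"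
    by (intro suminf_sum[symmetric] summable_mult2 summable_mexp_entry)
  finally show ?thesis
    by (simp add: matrix_matrix_mult_def sum_divide_distrib)
qed

lemma matpow_commute:
  assumes "Y ** X = X ** Y"
  shows "Y ** matpow X m = matpow X m ** Y"
proof (induction m)
  case (Suc m)
  have "Y ** matpow X (Suc m) = X ** (Y ** matpow X m)"
    by (simp only: matpow.simps matrix_mul_assoc assms)
  also have "\<dots> = matpow X (Suc m) ** Y"
    by (simp only: Suc.IH matpow.simps matrix_mul_assoc)
  finally show ?case .
qed simp

lemma mexp_commute:
  assumes "Y ** X = X ** Y"
  shows "Y ** mexp X = mexp X ** Y"
  by (simp only: vec_eq_iff matrix_mult_mexp_entry mexp_mult_matrix_entry matpow_commute[OF assms]
      simp_thms)

lemma evol_anticommute: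
  fixes H P B :: "complex^'n^'n"
  assumes "H ** P = P ** H" and "B ** P = - (P ** B)"
  shows "evol H t B ** P = - (P ** evol H t B)"
proof -
  have "mexp (smat c H) ** P = P ** mexp (smat c H)" for c
    using mexp_commute[of P "smat c H"] assms(1) by (simp add: smat_mult_left smat_mult_right)
  then show ?thesis
    unfolding evol_def by (intro anticommute_mult_commute commute_mult_anticommute assms(2))
qed

lemma matrix_mult_proj_eigenvector:
  assumes "P *v \<psi> = c *s \<psi>"
  shows "P ** proj \<psi> = smat c (proj \<psi>)"
proof -
  have "(P ** proj \<psi>) $ i $ j = (P *v \<psi>) $ i * cnj (\<psi> $ j)" for i j
    by (simp add: proj_def matrix_matrix_mult_def matrix_vector_mult_def sum_distrib_right mult.assoc)
  then show ?thesis
    by (simp add: vec_eq_iff assms smat_def proj_def mult.assoc)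
qed

lemma proj_mult_hermitian_eigenvector:
  assumes "hermitian P" and "P *v \<psi> = c *s \<psi>"
  shows "proj \<psi> ** P = smat (cnj c) (proj \<psi>)"
proof -
  have "(proj \<psi> ** P) $ i $ j = \<psi> $ i * cnj ((adj P *v \<psi>) $ j)" for i j
    by (simp add: proj_def adj_def matrix_matrix_mult_def matrix_vector_mult_def sum_distrib_left
        mult_ac)
  moreover have "adj P = P"
    using assms(1) by (simp add: hermitian_def)
  ultimately show ?thesis
    by (simp add: assms(2) vec_eq_iff smat_def proj_def mult_ac)
qed

lemma trace_parity_selection:
  fixes P \<rho> Y :: "complex^'n^'n"
  assumes "P ** \<rho> = smat p \<rho>" and "\<rho> ** P = smat p \<rho>" and "p \<noteq> 0"
    and "Y ** P = - (P ** Y)"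
  shows "trace (\<rho> ** Y) = 0"
proof -
  have "p * trace (\<rho> ** Y) = trace (\<rho> ** P ** Y)"
    by (simp add: assms(2) smat_mult_left trace_smat)
  also have "\<dots> = - trace (\<rho> ** Y ** P)"
    by (simp only: assms(4) matrix_mul_uminus_right trace_uminus minus_minus flip: matrix_mul_assoc)
  also have "trace (\<rho> ** Y ** P) = trace (P ** \<rho> ** Y)"
    by (simp only: trace_mul_sym[of _ P] matrix_mul_assoc)
  also have "\<dots> = p * trace (\<rho> ** Y)"
    by (simp add: assms(1) smat_mult_left trace_smat)
  finally show ?thesis
    using assms(3) by simp
qed

lemma quench_smat: "quench \<rho> (smat c K) M = c * cnj c * quench \<rho> K M"
  by (simp add: quench_def adj_smat smat_mult_left smat_mult_right smat_smat trace_smat)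

lemma quench_add:
  "quench \<rho> (K + L) M = quench \<rho> K M + quench \<rho> L M
     + trace (K ** \<rho> ** adj L ** M) + trace (L ** \<rho> ** adj K ** M)"
  by (simp add: quench_def adj_add matrix_add_ldistrib matrix_add_rdistrib trace_add)

lemma trace_as_quench_combination:
  fixes P A \<rho> M :: "complex^'n^'n"
  assumes adjP: "adj P = P" and adjA: "adj A = A"
    and P\<rho>: "P ** \<rho> = smat p \<rho>" and \<rho>P: "\<rho> ** P = smat p \<rho>" and pp: "p * p = 1"
    and \<rho>M: "trace (\<rho> ** M) = 0" and \<rho>AMA: "trace (\<rho> ** (A ** M ** A)) = 0"
  shows "trace (\<rho> ** A ** M) =
           p * quench \<rho> (smat (1 / sqrt 2) (P + A)) M
         + \<i> * quench \<rho> (smat (1 / sqrt 2) (mat 1 + smat \<i> A)) M"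
proof -
  let ?a = "trace (\<rho> ** A ** M)" and ?b = "trace (A ** \<rho> ** M)"
  have mult_\<rho>P: "X ** \<rho> ** P = smat p (X ** \<rho>)" for X
    by (simp add: \<rho>P smat_mult_right flip: matrix_mul_assoc)
  have quench_A: "quench \<rho> A M = 0"
    using \<rho>AMA trace_mul_sym[of A "\<rho> ** A ** M"]
    by (simp add: quench_def adjA matrix_mul_assoc)
  have Q\<^sub>1: "quench \<rho> (P + A) M = p * (?a + ?b)"
    unfolding quench_add using quench_A \<rho>M
    by (simp add: quench_def adjP adjA P\<rho> \<rho>P mult_\<rho>P smat_mult_left trace_smat algebra_simps)
  have Q\<^sub>2: "quench \<rho> (mat 1 + smat \<i> A) M = \<i> * (?b - ?a)"
    unfolding quench_add using quench_A \<rho>M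
    by (simp add: quench_smat quench_def adj_smat adj_mat_one adjA smat_mult_left smat_mult_right
        trace_smat algebra_simps)
  have half: "1 / sqrt 2 * cnj (1 / sqrt 2) = (1 / 2 :: complex)"
    by (simp flip: of_real_mult)
  have "\<i> * \<i> = (-1 :: complex)"
    by simp
  then show ?thesis
    unfolding quench_smat Q\<^sub>1 Q\<^sub>2 half using pp by algebra
qed

theorem theorem1:
  fixes P H A B :: "complex^'n^'n" and \<psi> :: "complex^'n" and p E :: complex and t :: real
  assumes hP: "hermitian P" and trP: "trace P = 0" and P2: "P ** P = mat 1"
    and hH: "hermitian H" and HP: "H ** P = P ** H"
    and hA: "hermitian A" and hB: "hermitian B"
    and AP: "A ** P + P ** A = 0" and BP: "B ** P + P ** B = 0"
    and nrm: "norm \<psi> = 1"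
    and eig: "H *v \<psi> = E *s \<psi>"
    and par: "P *v \<psi> = p *s \<psi>" and p: "p = 1 \<or> p = -1"
  shows "corr H (proj \<psi>) A B t =
           p * quench (proj \<psi>) (smat (1 / sqrt 2) (P + A)) (evol H t B)
         + \<i> * quench (proj \<psi>) (smat (1 / sqrt 2) (mat 1 + smat \<i> A)) (evol H t B)"
proof -
  define M where "M = evol H t B"
  have P\<rho>: "P ** proj \<psi> = smat p (proj \<psi>)"
    using par by (rule matrix_mult_proj_eigenvector)
  have \<rho>P: "proj \<psi> ** P = smat p (proj \<psi>)"
    using proj_mult_hermitian_eigenvector[OF hP par] p by auto
  have A_anti: "A ** P = - (P ** A)" and B_anti: "B ** P = - (P ** B)"
    using AP BP by (simp_all add: eq_neg_iff_add_eq_0)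
  have M_anti: "M ** P = - (P ** M)"
    unfolding M_def using HP B_anti by (rule evol_anticommute)
  have AMA_anti: "(A ** M ** A) ** P = - (P ** (A ** M ** A))"
    by (intro commute_mult_anticommute anticommute_mult_anticommute A_anti M_anti)
  have "p \<noteq> 0" using p by auto
  then have "trace (proj \<psi> ** M) = 0" and "trace (proj \<psi> ** (A ** M ** A)) = 0"
    using P\<rho> \<rho>P M_anti AMA_anti by (auto intro: trace_parity_selection)
  moreover have "adj P = P" and "adj A = A"
    using hP hA by (simp_all add: hermitian_def)
  moreover have "p * p = 1" using p by auto
  ultimately show ?thesis
    unfolding corr_def M_def[symmetric] using P\<rho> \<rho>P by (intro trace_as_quench_combination)
qed

end
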